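(* Assume $G$ is an algebraic torus. Let $(\delta,\delta')$ be an adjacent pair in $\mathsf M_{\mathbb R}\setminus\mathcal H$, separated by $H\in\mathcal H$, let $\delta_0$ be the point where $[\delta,\delta']$ meets $H$, and let $F$ be the unique facet of $\delta_0+\boldsymbol\nabla$ parallel to $H$ with $F\cap(\delta+\boldsymbol\nabla)\neq\emptyset$. Then for every $\chi\in\mathcal C_\delta\setminus\mathcal C_{\delta'}$ and every $\beta\in\bigwedge^*\mathcal W_F^+$, we have $\chi+\beta\in\mathcal C_\delta\cap\mathcal C_{\delta'}$.
   Context: $G$ is an algebraic torus over an algebraically closed field of characteristic $0$ with character lattice $\mathsf M$, cocharacter lattice $\mathsf N$, pairing $\langle-,-\rangle$. $X$ is a quasi-symmetric $G$-representation with weights $\beta_1,\dots,\beta_d$ (for each line $L\subset\mathsf M_{\mathbb R}$, $\sum_{\beta_i\in L}\beta_i=0$); $\boldsymbol\Sigma=\{\sum a_i\beta_i:a_i\in[0,1]\}$ spans $\mathsf M_{\mathbb R}$, and the complement of the linear hyperplanes parallel to facets of $\boldsymbol\Sigma$ is nonempty. Here $\boldsymbol\nabla=\tfrac12\boldsymbol\Sigma$ (for a torus, $\boldsymbol\nabla=\{\chi:|\langle\chi,\lambda\rangle|\le\eta_\lambda/2\}$ with $\eta_\lambda=\sum_{\langle\beta_i,\lambda\rangle<0}(-\langle\beta_i,\lambda\rangle)$, which equals $\tfrac12\boldsymbol\Sigma$). $\mathcal H$ = affine hyperplanes $m+B$ with $m\in\mathsf M$ and $B\cap\boldsymbol\nabla$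 a facet of $\boldsymbol\nabla$; $(\delta,\delta')$ adjacent: $\delta,\delta'$ avoid all of $\mathcal H$ and exactly one member of $\mathcal H$ meets $[\delta,\delta']$. $\mathcal C_\delta=(\delta+\boldsymbol\nabla)\cap\mathsf M$. For the facet $F$ with inward normal $\lambda_F\in\mathsf N_{\mathbb R}$ (so $\delta_0+\boldsymbol\nabla$ lies on the side $\langle x,\lambda_F\rangle\ge c$), $\mathcal W_F^+=\{i:\langle\beta_i,\lambda_F\rangle>0\}$, $d_F^+=\#\mathcal W_F^+$, and $\bigwedge^*\mathcal W_F^+$ is the set of sums $\sum_{i\in S}\beta_i$ over subsets $S\subseteq\mathcal W_F^+$ with $1\le\#S\le d_F^+-1$. *)

theory Defs
  imports "HOL-Analysis.Analysis"
begin

text \<open>Model: the character lattice M of the torus is identified with the integer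
  points of real^'n, M_R = real^'n, N = M^dual = integer points as well, and the
  pairing is the standard inner product.\<close>

definition lattice_pts :: "(real^'n) set" where
  "lattice_pts = {x. \<forall>i. x $ i \<in> \<int>}"

definition zonotope :: "nat \<Rightarrow> (nat \<Rightarrow> real^'n) \<Rightarrow> (real^'n) set" where
  "zonotope d \<beta> = {(\<Sum>i<d. a i *\<^sub>R \<beta> i) | a. \<forall>i<d. 0 \<le> a i \<and> a i \<le> 1}"

definition nabla :: "nat \<Rightarrow> (nat \<Rightarrow> real^'n) \<Rightarrow> (real^'n) set" where
  "nabla d \<beta> = (\<lambda>x. (1/2) *\<^sub>R x) ` zonotope d \<beta>"

definition quasi_symmetric :: "nat \<Rightarrow> (nat \<Rightarrow> real^'n) \<Rightarrow> bool" where
  "quasi_symmetric d \<beta> \<longleftrightarrow>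
     (\<forall>v. v \<noteq> 0 \<longrightarrow> (\<Sum>i\<in>{i. i < d \<and> \<beta> i \<in> span {v}}. \<beta> i) = 0)"

definition affine_hyperplane :: "(real^'n) set \<Rightarrow> bool" where
  "affine_hyperplane B \<longleftrightarrow> (\<exists>a b. a \<noteq> 0 \<and> B = {x. a \<bullet> x = b})"

definition hyps :: "nat \<Rightarrow> (nat \<Rightarrow> real^'n) \<Rightarrow> (real^'n) set set" where
  "hyps d \<beta> = {(\<lambda>x. m + x) ` B | m B. m \<in> lattice_pts \<and> affine_hyperplane B
                 \<and> (B \<inter> nabla d \<beta>) facet_of nabla d \<beta>}"

definition adjacent :: "nat \<Rightarrow> (nat \<Rightarrow> real^'n) \<Rightarrow> real^'n \<Rightarrow> real^'n \<Rightarrow> bool" where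
  "adjacent d \<beta> \<delta> \<delta>' \<longleftrightarrow>
     \<delta> \<notin> \<Union>(hyps d \<beta>) \<and> \<delta>' \<notin> \<Union>(hyps d \<beta>) \<and>
     (\<exists>!H. H \<in> hyps d \<beta> \<and> H \<inter> closed_segment \<delta> \<delta>' \<noteq> {})"

definition Cset :: "nat \<Rightarrow> (nat \<Rightarrow> real^'n) \<Rightarrow> real^'n \<Rightarrow> (real^'n) set" where
  "Cset d \<beta> \<delta> = ((\<lambda>x. \<delta> + x) ` nabla d \<beta>) \<inter> lattice_pts"

definition Wplus :: "nat \<Rightarrow> (nat \<Rightarrow> real^'n) \<Rightarrow> real^'n \<Rightarrow> nat set" where
  "Wplus d \<beta> l = {i. i < d \<and> \<beta> i \<bullet> l > 0}"

definition wedge_star :: "nat \<Rightarrow> (nat \<Rightarrow> real^'n) \<Rightarrow> real^'n \<Rightarrow> (real^'n) set" where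
  "wedge_star d \<beta> l = {(\<Sum>i\<in>S. \<beta> i) | S. S \<subseteq> Wplus d \<beta> l \<and> 1 \<le> card S
                          \<and> card S \<le> card (Wplus d \<beta> l) - 1}"

end

(*
  Quasi-symmetry makes the weights sum to zero, so nabla is centrally symmetric.
  For chi in C_delta but not in C_delta', the segment from chi - delta to chi - delta'
  leaves nabla through a facet; translating that facet by chi gives a wall meeting
  [delta, delta'], which can only be H, so x = chi - delta0 lies on the face of nabla
  where lamF is minimal. There the coefficients of all weights not orthogonal to lamF
  are forced, and a partial sum b of the lamF-positive weights can be absorbed line by
  line, so x + b is in nabla with lamF-value strictly between the minimum (at x) and
  the maximum (at -x). The same exit argument for chi + b then shows that
  chi + b - delta and chi + b - delta' cannot lie outside nabla.
*)
theory Submission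
  imports Defs
begin

lemma span_singleton_eq:
  fixes x y :: "'a::real_vector"
  assumes "x \<in> span {y}" "x \<noteq> 0"
  shows "span {x} = span {y}"
proof -
  obtain k where k: "x = k *\<^sub>R y" using assms(1) by (auto simp: span_singleton)
  then have "y = (1/k) *\<^sub>R x" using assms(2) by auto
  then have "y \<in> span {x}" by (simp add: span_mul span_base)
  then show ?thesis
    using assms(1) by (intro antisym span_minimal) auto
qed

lemma span_singleton_inner_eq_0:
  fixes u z l :: "'a::real_inner"
  assumes "z \<in> span {u}" "u \<bullet> l \<noteq> 0" "z \<bullet> l = 0"
  shows "z = 0"
  using assms by (auto simp: span_singleton)

lemma double_sum_pos_subset_le_sum_abs:
  fixes w :: "'a \<Rightarrow> real"
  assumes "finite L" "(\<Sum>j\<in>L. w j) = 0" "T \<subseteq> L" "\<And>j. j \<in> T \<Longrightarrow> 0 < w j"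
  shows "2 * (\<Sum>j\<in>T. w j) \<le> (\<Sum>j\<in>L. \<bar>w j\<bar>)"
proof -
  have "2 * (\<Sum>j\<in>T. w j) = (\<Sum>j\<in>T. \<bar>w j\<bar> + w j)"
    unfolding sum_distrib_left by (rule sum.cong) (auto dest: assms(4))
  also have "\<dots> \<le> (\<Sum>j\<in>L. \<bar>w j\<bar> + w j)"
    by (rule sum_mono2) (use assms(1,3) in auto)
  also have "\<dots> = (\<Sum>j\<in>L. \<bar>w j\<bar>)"
    using assms(2) by (simp add: sum.distrib)
  finally show ?thesis .
qed

lemma translate_hyperplane:
  fixes a m :: "'a::real_inner"
  shows "(\<lambda>x. m + x) ` {x. a \<bullet> x = e} = {z. a \<bullet> z = e + a \<bullet> m}"
proof (intro set_eqI iffI)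
  fix z assume "z \<in> {z. a \<bullet> z = e + a \<bullet> m}"
  then show "z \<in> (\<lambda>x. m + x) ` {x. a \<bullet> x = e}"
    by (intro rev_image_eqI[of "z - m"]) (auto simp: inner_diff_right)
qed (auto simp: inner_add_right)

lemma hyperplane_subset_imp_parallel:
  fixes a l :: "'a::real_inner"
  assumes a: "a \<noteq> 0" and l: "l \<noteq> 0" and sub: "{z. a \<bullet> z = e} \<subseteq> {z. l \<bullet> z = k}"
  shows "\<exists>r. r \<noteq> 0 \<and> l = r *\<^sub>R a \<and> k = r * e"
proof -
  define z0 where "z0 = (e / (a \<bullet> a)) *\<^sub>R a"
  define r where "r = (l \<bullet> a) / (a \<bullet> a)"
  define v where "v = l - r *\<^sub>R a"
  have aa: "a \<bullet> a \<noteq> 0" using a by simp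
  have z0: "a \<bullet> z0 = e" using aa by (simp add: z0_def)
  have av: "a \<bullet> v = 0" using aa by (simp add: v_def r_def inner_diff_right inner_commute)
  have lz0: "l \<bullet> z0 = k" using z0 sub by auto
  have "a \<bullet> (z0 + v) = e" using z0 av by (simp add: inner_add_right)
  then have "l \<bullet> (z0 + v) = k" using sub by auto
  then have lv: "l \<bullet> v = 0" using lz0 by (simp add: inner_add_right)
  have "v \<bullet> v = l \<bullet> v - r * (a \<bullet> v)" by (simp add: v_def inner_diff_left inner_commute)
  then have "v = 0" using lv av by simp
  then have lr: "l = r *\<^sub>R a" by (simp add: v_def)
  then show ?thesis using l lz0 z0 by (intro exI[of _ r]) auto
qed

lemma hyperplane_eq_level_set:
  fixes a l t p :: "'a::real_inner"
  assumes "a \<noteq> 0" "l \<noteq> 0" "H = {z. a \<bullet> z = e}"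
    and "(\<lambda>x. t + x) ` H \<subseteq> {x. x \<bullet> l = c}" "p \<in> H"
  shows "H = {z. z \<bullet> l = p \<bullet> l}"
proof -
  have "H \<subseteq> {z. l \<bullet> z = c - l \<bullet> t}"
  proof
    fix z assume "z \<in> H"
    then have "(t + z) \<bullet> l = c" using assms(4) by blast
    then show "z \<in> {z. l \<bullet> z = c - l \<bullet> t}"
      by (simp add: inner_add_left inner_add_right inner_commute algebra_simps)
  qed
  then obtain r where "l = r *\<^sub>R a" "c - l \<bullet> t = r * e" "r \<noteq> 0"
    using hyperplane_subset_imp_parallel[OF assms(1,2)] assms(3) by blast
  then show ?thesis using assms(3,5) by (auto simp: inner_commute)
qed

lemma closed_segment_meets_level_set_once:
  fixes x y p q l :: "'a::real_inner"
  assumes "x \<bullet> l \<noteq> k" "p \<in> closed_segment x y" "q \<in> closed_segment x y" "p \<bullet> l = k" "q \<bullet> l = k"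
  shows "p = q"
proof -
  obtain s where s: "p = (1 - s) *\<^sub>R x + s *\<^sub>R y" using assms(2) by (auto simp: closed_segment_def)
  obtain t where t: "q = (1 - t) *\<^sub>R x + t *\<^sub>R y" using assms(3) by (auto simp: closed_segment_def)
  have "p \<bullet> l = x \<bullet> l + s * (y \<bullet> l - x \<bullet> l)" "q \<bullet> l = x \<bullet> l + t * (y \<bullet> l - x \<bullet> l)"
    by (simp_all add: s t inner_add_left algebra_simps)
  moreover from this have "y \<bullet> l - x \<bullet> l \<noteq> 0" using assms(1,4) by auto
  ultimately have "s = t" using assms(4,5) by simp
  then show ?thesis using s t by simp
qed

lemma diff_mem_closed_segment:
  fixes y u v p :: "'a::real_vector"
  assumes "p \<in> closed_segment (y - u) (y - v)"
  shows "y - p \<in> closed_segment u v"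
proof -
  obtain s where "0 \<le> s" "s \<le> 1" "p = (1 - s) *\<^sub>R (y - u) + s *\<^sub>R (y - v)"
    using assms by (auto simp: closed_segment_def)
  moreover from this have "y - p = (1 - s) *\<^sub>R u + s *\<^sub>R v" by (simp add: algebra_simps)
  ultimately show ?thesis by (auto simp: closed_segment_def)
qed

lemma facet_of_linear_image:
  fixes f :: "'a::euclidean_space \<Rightarrow> 'b::euclidean_space"
  assumes "linear f" "inj f"
  shows "f ` F facet_of f ` S \<longleftrightarrow> F facet_of S"
  using assms by (simp add: facet_of_def face_of_linear_image aff_dim_injective_linear_image)

lemma polyhedron_exit_facet:
  fixes N :: "'a::euclidean_space set"
  assumes "polyhedron N" "affine hull N = UNIV" "x \<in> N" "y \<notin> N"
  obtains p a b where "p \<in> closed_segment x y" "p \<in> N" "a \<bullet> p = b"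
    "a \<noteq> 0" "N \<subseteq> {z. a \<bullet> z \<le> b}" "(N \<inter> {z. a \<bullet> z = b}) facet_of N"
proof -
  obtain p where p: "p \<in> closed_segment x y" "p \<in> frontier N"
    using connected_Int_frontier[of "closed_segment x y" N] assms(3,4) by auto
  have "p \<in> N - rel_interior N"
    using p(2) polyhedron_imp_closed[OF assms(1)] rel_interior_interior[OF assms(2)]
    by (simp add: frontier_def)
  then obtain G where G: "G facet_of N" "p \<in> G"
    using rel_boundary_of_polyhedron[OF assms(1)] by blast
  obtain a b where "a \<noteq> 0" "N \<subseteq> {z. a \<bullet> z \<le> b}" "G = N \<inter> {z. a \<bullet> z = b}"
    using facet_of_polyhedron[OF assms(1) G(1)] by blast
  with that p(1) G show ?thesis by blast
qed

definition line_class :: "nat \<Rightarrow> (nat \<Rightarrow> 'a::real_vector) \<Rightarrow> nat \<Rightarrow> nat set" where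
  "line_class d \<beta> i = {j. j < d \<and> \<beta> j \<in> span {\<beta> i}}"

lemma line_class_eq:
  "j \<in> line_class d \<beta> i \<Longrightarrow> \<beta> j \<noteq> 0 \<Longrightarrow> line_class d \<beta> j = line_class d \<beta> i"
  using span_singleton_eq[of "\<beta> j" "\<beta> i"] by (simp add: line_class_def)

lemma sum_eq_0_by_lines:
  fixes \<beta> :: "nat \<Rightarrow> 'a::real_vector" and g :: "nat \<Rightarrow> 'b::comm_monoid_add"
  assumes "\<And>j. j < d \<Longrightarrow> \<beta> j = 0 \<Longrightarrow> g j = 0"
    and "\<And>i. i < d \<Longrightarrow> \<beta> i \<noteq> 0 \<Longrightarrow> sum g (line_class d \<beta> i) = 0"
  shows "(\<Sum>j<d. g j) = 0"
proof -
  let ?Nz = "{j. j < d \<and> \<beta> j \<noteq> 0}"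
  have "(\<Sum>j<d. g j) = sum g ?Nz"
    by (rule sum.mono_neutral_right) (auto simp: assms(1))
  also have "\<dots> = (\<Sum>V \<in> (\<lambda>j. span {\<beta> j}) ` ?Nz. sum g {j \<in> ?Nz. span {\<beta> j} = V})"
    by (rule sum.group[symmetric]) auto
  also have "\<dots> = 0"
  proof (rule sum.neutral, clarify)
    fix i assume i: "i < d" "\<beta> i \<noteq> 0"
    have "{j \<in> ?Nz. span {\<beta> j} = span {\<beta> i}} = line_class d \<beta> i - {j. \<beta> j = 0}"
    proof (intro set_eqI iffI)
      fix j assume "j \<in> {j \<in> ?Nz. span {\<beta> j} = span {\<beta> i}}"
      then show "j \<in> line_class d \<beta> i - {j. \<beta> j = 0}"
        unfolding line_class_def by (metis (mono_tags, lifting) DiffI mem_Collect_eq singletonI span_base)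
    qed (use span_singleton_eq in \<open>auto simp: line_class_def\<close>)
    also have "sum g \<dots> = sum g (line_class d \<beta> i)"
      by (rule sum.mono_neutral_left) (auto simp: line_class_def assms(1))
    finally show "sum g {j \<in> ?Nz. span {\<beta> j} = span {\<beta> i}} = 0"
      using assms(2) i by simp
  qed
  finally show ?thesis .
qed

lemma quasi_symmetric_sum_eq_0:
  "quasi_symmetric d \<beta> \<Longrightarrow> (\<Sum>i<d. \<beta> i) = 0"
  by (rule sum_eq_0_by_lines) (auto simp: quasi_symmetric_def line_class_def)

lemma zonotope_eq_sum_segments: "zonotope d \<beta> = (\<Sum>i<d. closed_segment 0 (\<beta> i))"
proof -
  have seg: "closed_segment 0 (\<beta> i) = {a *\<^sub>R \<beta> i | a. 0 \<le> a \<and> a \<le> 1}" for i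
    by (auto simp: closed_segment_def)
  have "{sum s {..<d} |s. \<forall>i\<in>{..<d}. s i \<in> {a *\<^sub>R \<beta> i | a. 0 \<le> a \<and> a \<le> 1}} = zonotope d \<beta>"
  proof (intro set_eqI iffI)
    fix z assume "z \<in> {sum s {..<d} |s. \<forall>i\<in>{..<d}. s i \<in> {a *\<^sub>R \<beta> i | a. 0 \<le> a \<and> a \<le> 1}}"
    then obtain s where "z = sum s {..<d}" "\<forall>i<d. \<exists>a. s i = a *\<^sub>R \<beta> i \<and> 0 \<le> a \<and> a \<le> 1" by auto
    moreover from this obtain a where "\<forall>i<d. s i = a i *\<^sub>R \<beta> i \<and> 0 \<le> a i \<and> a i \<le> 1" by metis
    ultimately show "z \<in> zonotope d \<beta>" unfolding zonotope_def by auto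
  qed (auto simp: zonotope_def)
  then show ?thesis by (simp add: set_sum_alt seg)
qed

lemma polytope_zonotope: "polytope (zonotope d \<beta>)"
proof -
  have "finite (\<Sum>i<d. {0, \<beta> i})" by (induction d) (auto intro: finite_set_plus)
  then show ?thesis
    unfolding zonotope_eq_sum_segments segment_convex_hull convex_hull_set_sum[symmetric]
    by (rule polytope_convex_hull)
qed

lemma mem_nabla_iff:
  "z \<in> nabla d \<beta> \<longleftrightarrow> (\<exists>a. (\<forall>i<d. 0 \<le> a i \<and> a i \<le> 1) \<and> z = (\<Sum>i<d. (a i / 2) *\<^sub>R \<beta> i))"
proof -
  have "(\<Sum>i<d. (a i / 2) *\<^sub>R \<beta> i) = (1/2) *\<^sub>R (\<Sum>i<d. a i *\<^sub>R \<beta> i)" for a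
    by (simp add: scaleR_sum_right)
  then show ?thesis unfolding nabla_def zonotope_def by auto
qed

lemma polytope_nabla: "polytope (nabla d \<beta>)"
  unfolding nabla_def by (rule polytope_linear_image[OF linear_scaleR polytope_zonotope])

lemma affine_hull_nabla:
  assumes "span (zonotope d \<beta>) = UNIV"
  shows "affine hull (nabla d \<beta>) = UNIV"
proof -
  have "span (nabla d \<beta>) = (\<lambda>x. (1/2) *\<^sub>R x) ` span (zonotope d \<beta>)"
    unfolding nabla_def by (rule span_linear_image) (rule linear_scaleR)
  also have "\<dots> = UNIV"
    using assms by (auto simp: image_iff intro!: exI[where x = "2 *\<^sub>R _"])
  finally have "span (nabla d \<beta>) = UNIV" .
  moreover have "0 \<in> nabla d \<beta>" unfolding mem_nabla_iff by (intro exI[of _ "\<lambda>i. 0"]) auto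
  ultimately show ?thesis by (simp add: affine_hull_span_0 hull_inc)
qed

lemma nabla_uminus:
  assumes "(\<Sum>i<d. \<beta> i) = 0"
  shows "uminus ` nabla d \<beta> = nabla d \<beta>"
proof -
  have neg: "- z \<in> nabla d \<beta>" if "z \<in> nabla d \<beta>" for z
  proof -
    obtain a where a: "\<forall>i<d. 0 \<le> a i \<and> a i \<le> 1" and z: "z = (\<Sum>i<d. (a i / 2) *\<^sub>R \<beta> i)"
      using \<open>z \<in> nabla d \<beta>\<close> unfolding mem_nabla_iff by blast
    have "- z = (\<Sum>i<d. ((1 - a i) / 2) *\<^sub>R \<beta> i) - (1/2) *\<^sub>R (\<Sum>i<d. \<beta> i)"
      unfolding z by (simp add: scaleR_sum_right sum_subtractf[symmetric] sum_negf[symmetric] algebra_simps diff_divide_distrib)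
    then show ?thesis
      using a assms unfolding mem_nabla_iff by (intro exI[of _ "\<lambda>i. 1 - a i"]) auto
  qed
  then show ?thesis by (force intro: rev_image_eqI[of "- _"])
qed

lemma nabla_update_coeff:
  assumes "\<forall>j<d. 0 \<le> a j \<and> a j \<le> 1" "i < d" "0 \<le> t" "t \<le> 1"
  shows "(\<Sum>j<d. (a j / 2) *\<^sub>R \<beta> j) + ((t - a i) / 2) *\<^sub>R \<beta> i \<in> nabla d \<beta>"
proof -
  have "(\<Sum>j<d. ((a(i := t)) j / 2) *\<^sub>R \<beta> j) - (\<Sum>j<d. (a j / 2) *\<^sub>R \<beta> j)
      = (\<Sum>j<d. if j = i then ((t - a i) / 2) *\<^sub>R \<beta> i else 0)"
    unfolding sum_subtractf[symmetric] by (rule sum.cong) (auto simp: diff_divide_distrib scaleR_diff_left)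
  then have "(\<Sum>j<d. ((a(i := t)) j / 2) *\<^sub>R \<beta> j) = (\<Sum>j<d. (a j / 2) *\<^sub>R \<beta> j) + ((t - a i) / 2) *\<^sub>R \<beta> i"
    using \<open>i < d\<close> by (simp add: algebra_simps)
  then show ?thesis
    using assms unfolding mem_nabla_iff by (intro exI[of _ "a(i := t)"]) auto
qed

lemma nabla_minimizer_forced_coeffs:
  assumes a: "\<forall>j<d. 0 \<le> a j \<and> a j \<le> 1"
    and min: "\<forall>z\<in>nabla d \<beta>. (\<Sum>j<d. (a j / 2) *\<^sub>R \<beta> j) \<bullet> l \<le> z \<bullet> l"
    and "i < d"
  shows "\<beta> i \<bullet> l > 0 \<Longrightarrow> a i = 0" and "\<beta> i \<bullet> l < 0 \<Longrightarrow> a i = 1"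
proof -
  have "0 \<le> (t - a i) * (\<beta> i \<bullet> l)" if "0 \<le> t" "t \<le> 1" for t
    using min nabla_update_coeff[OF a \<open>i < d\<close> that, of \<beta>] by (fastforce simp: inner_add_left)
  from this[of 0] this[of 1] a \<open>i < d\<close>
  show "\<beta> i \<bullet> l > 0 \<Longrightarrow> a i = 0" and "\<beta> i \<bullet> l < 0 \<Longrightarrow> a i = 1"
    by (auto simp: mult_le_0_iff zero_le_mult_iff)
qed

lemma inner_min_face_point:
  assumes "(\<Sum>i<d. \<beta> i) = 0"
    and "\<And>i. i < d \<Longrightarrow> \<beta> i \<bullet> l > 0 \<Longrightarrow> a i = 0" "\<And>i. i < d \<Longrightarrow> \<beta> i \<bullet> l < 0 \<Longrightarrow> a i = 1"
  shows "2 * ((\<Sum>i<d. (a i / 2) *\<^sub>R \<beta> i) \<bullet> l) = - (\<Sum>i\<in>Wplus d \<beta> l. \<beta> i \<bullet> l)"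
proof -
  have "2 * ((\<Sum>i<d. (a i / 2) *\<^sub>R \<beta> i) \<bullet> l) = (\<Sum>i<d. min (\<beta> i \<bullet> l) 0)"
    unfolding inner_sum_left sum_distrib_left
    by (rule sum.cong) (auto simp: min_def dest: assms(2,3) intro: antisym_conv3)
  also have "\<dots> = (\<Sum>i<d. \<beta> i \<bullet> l - max (\<beta> i \<bullet> l) 0)"
    by (rule sum.cong) (simp_all add: min_def max_def)
  also have "\<dots> = (\<Sum>i<d. \<beta> i \<bullet> l) - (\<Sum>i<d. max (\<beta> i \<bullet> l) 0)"
    by (rule sum_subtractf)
  also have "(\<Sum>i<d. max (\<beta> i \<bullet> l) 0) = (\<Sum>i\<in>Wplus d \<beta> l. \<beta> i \<bullet> l)"
    by (rule sum.mono_neutral_cong_right) (auto simp: Wplus_def max_def)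
  finally show ?thesis
    using assms(1) by (simp flip: inner_sum_left)
qed

(*
  The weights on a line sum to zero, so its l-positive weights carry half of its absolute
  l-mass; line_fraction is the share carried by the weights in S (junk value 0 on lines
  orthogonal to l). Raising the coefficients of the positive weights of the line by this
  fraction and lowering those of the negative ones moves a point by exactly the part of the
  sum over S lying on that line.
*)
definition line_fraction :: "nat \<Rightarrow> (nat \<Rightarrow> 'a::real_inner) \<Rightarrow> 'a \<Rightarrow> nat set \<Rightarrow> nat \<Rightarrow> real" where
  "line_fraction d \<beta> l S i =
     2 * (\<Sum>j\<in>line_class d \<beta> i \<inter> S. \<beta> j \<bullet> l) / (\<Sum>j\<in>line_class d \<beta> i. \<bar>\<beta> j \<bullet> l\<bar>)"

lemma line_fraction_eq_on_line:
  "j \<in> line_class d \<beta> i \<Longrightarrow> \<beta> j \<noteq> 0 \<Longrightarrow> line_fraction d \<beta> l S j = line_fraction d \<beta> l S i"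
  by (simp add: line_fraction_def line_class_eq)

lemma line_fraction_bounds:
  assumes "quasi_symmetric d \<beta>" "S \<subseteq> Wplus d \<beta> l" "\<beta> i \<noteq> 0"
  shows "0 \<le> line_fraction d \<beta> l S i" "line_fraction d \<beta> l S i \<le> 1"
proof -
  let ?L = "line_class d \<beta> i"
  have pos: "0 < \<beta> j \<bullet> l" if "j \<in> S" for j using assms(2) that by (auto simp: Wplus_def)
  have "(\<Sum>j\<in>?L. \<beta> j \<bullet> l) = 0"
    using assms(1,3) by (simp add: quasi_symmetric_def line_class_def flip: inner_sum_left)
  then have "2 * (\<Sum>j\<in>?L \<inter> S. \<beta> j \<bullet> l) \<le> (\<Sum>j\<in>?L. \<bar>\<beta> j \<bullet> l\<bar>)"
    by (rule double_sum_pos_subset_le_sum_abs[rotated]) (auto simp: line_class_def pos)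
  moreover have "0 \<le> (\<Sum>j\<in>?L \<inter> S. \<beta> j \<bullet> l)"
    using pos by (intro sum_nonneg) (simp add: less_imp_le)
  ultimately show "0 \<le> line_fraction d \<beta> l S i" "line_fraction d \<beta> l S i \<le> 1"
    by (auto simp: line_fraction_def divide_le_eq_1)
qed

lemma line_sum_shift_eq_0:
  assumes "S \<subseteq> Wplus d \<beta> l" "i < d" "\<beta> i \<noteq> 0"
  shows "(\<Sum>j\<in>line_class d \<beta> i.
           (sgn (\<beta> j \<bullet> l) * line_fraction d \<beta> l S j / 2) *\<^sub>R \<beta> j - (if j \<in> S then \<beta> j else 0)) = 0"
    (is "sum ?g ?L = 0")
proof -
  have on_line: "\<exists>k. \<beta> j = k *\<^sub>R \<beta> i" if "j \<in> ?L" for j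
    using that by (auto simp: line_class_def span_singleton)
  have not_S: "j \<notin> S" if "\<beta> j \<bullet> l = 0" for j
    using assms(1) that by (auto simp: Wplus_def)
  show ?thesis
  proof (cases "\<beta> i \<bullet> l = 0")
    case True
    then have "?g j = 0" if "j \<in> ?L" for j
      using on_line[OF that] not_S by auto
    then show ?thesis by simp
  next
    case False
    let ?\<rho> = "line_fraction d \<beta> l S i"
    have fin: "finite ?L" by (simp add: line_class_def)
    have "?g j \<bullet> l = ?\<rho> / 2 * \<bar>\<beta> j \<bullet> l\<bar> - (if j \<in> S then \<beta> j \<bullet> l else 0)" if "j \<in> ?L" for j
      using line_fraction_eq_on_line[OF that] not_S
      by (cases "\<beta> j = 0") (simp_all add: abs_sgn inner_diff_left algebra_simps)
    then have "sum ?g ?L \<bullet> l = (\<Sum>j\<in>?L. ?\<rho> / 2 * \<bar>\<beta> j \<bullet> l\<bar> - (if j \<in> S then \<beta> j \<bullet> l else 0))"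
      unfolding inner_sum_left by (rule sum.cong[OF refl])
    also have "\<dots> = ?\<rho> / 2 * (\<Sum>j\<in>?L. \<bar>\<beta> j \<bullet> l\<bar>) - (\<Sum>j\<in>?L \<inter> S. \<beta> j \<bullet> l)"
      using fin by (simp add: sum_subtractf sum_distrib_left sum.inter_restrict)
    also have "\<dots> = 0"
    proof -
      have "i \<in> ?L" using assms(2) by (simp add: line_class_def span_base)
      then have "0 < (\<Sum>j\<in>?L. \<bar>\<beta> j \<bullet> l\<bar>)"
        using False fin by (intro sum_pos2[of _ i]) auto
      then show ?thesis by (simp add: line_fraction_def)
    qed
    finally have "sum ?g ?L \<bullet> l = 0" .
    moreover have "sum ?g ?L \<in> span {\<beta> i}"
      by (intro span_sum span_diff span_scale) (auto simp: line_class_def span_zero)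
    ultimately show ?thesis
      using span_singleton_inner_eq_0[of "sum ?g ?L" "\<beta> i" l] False by blast
  qed
qed

lemma min_face_point_plus_positive_sum_in_nabla:
  assumes qs: "quasi_symmetric d \<beta>"
    and a: "\<forall>i<d. 0 \<le> a i \<and> a i \<le> 1"
    and a_pos: "\<And>i. i < d \<Longrightarrow> \<beta> i \<bullet> l > 0 \<Longrightarrow> a i = 0"
    and a_neg: "\<And>i. i < d \<Longrightarrow> \<beta> i \<bullet> l < 0 \<Longrightarrow> a i = 1"
    and S: "S \<subseteq> Wplus d \<beta> l"
  shows "(\<Sum>i<d. (a i / 2) *\<^sub>R \<beta> i) + (\<Sum>i\<in>S. \<beta> i) \<in> nabla d \<beta>"
proof -
  define c where "c i = a i + sgn (\<beta> i \<bullet> l) * line_fraction d \<beta> l S i" for i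
  have c: "0 \<le> c i \<and> c i \<le> 1" if "i < d" for i
  proof (cases "\<beta> i \<bullet> l" "0::real" rule: linorder_cases)
    case less
    then have "\<beta> i \<noteq> 0" by auto
    then show ?thesis using less that a_neg line_fraction_bounds[OF qs S, of i] by (simp add: c_def)
  next
    case greater
    then have "\<beta> i \<noteq> 0" by auto
    then show ?thesis using greater that a_pos line_fraction_bounds[OF qs S, of i] by (simp add: c_def)
  qed (use a that in \<open>simp add: c_def\<close>)
  have "(\<Sum>j<d. ((c j - a j) / 2) *\<^sub>R \<beta> j - (if j \<in> S then \<beta> j else 0)) = 0"
  proof (rule sum_eq_0_by_lines)
    show "((c j - a j) / 2) *\<^sub>R \<beta> j - (if j \<in> S then \<beta> j else 0) = 0" if "\<beta> j = 0" for j
      using that by simp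
  next
    fix i assume "i < d" "\<beta> i \<noteq> 0"
    then show "(\<Sum>j\<in>line_class d \<beta> i. ((c j - a j) / 2) *\<^sub>R \<beta> j - (if j \<in> S then \<beta> j else 0)) = 0"
      using line_sum_shift_eq_0[OF S] by (simp add: c_def)
  qed
  moreover have "(\<Sum>j<d. if j \<in> S then \<beta> j else 0) = (\<Sum>j\<in>S. \<beta> j)"
    using S by (intro sum.mono_neutral_cong_right) (auto simp: Wplus_def)
  ultimately have "(\<Sum>i<d. (c i / 2) *\<^sub>R \<beta> i) = (\<Sum>i<d. (a i / 2) *\<^sub>R \<beta> i) + (\<Sum>i\<in>S. \<beta> i)"
    by (simp add: sum_subtractf diff_divide_distrib scaleR_diff_left diff_eq_eq add.commute)
  then show ?thesis
    unfolding mem_nabla_iff using c by (intro exI[of _ c]) simp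
qed

lemma lattice_pts_add: "x \<in> lattice_pts \<Longrightarrow> y \<in> lattice_pts \<Longrightarrow> x + y \<in> lattice_pts"
  by (simp add: lattice_pts_def)

lemma mem_Cset_iff: "x \<in> Cset d \<beta> e \<longleftrightarrow> x \<in> lattice_pts \<and> x - e \<in> nabla d \<beta>"
  by (auto simp: Cset_def image_iff intro: bexI[of _ "x - e"])

lemma wedge_star_subset_lattice_pts:
  assumes "\<forall>i<d. \<beta> i \<in> lattice_pts"
  shows "wedge_star d \<beta> l \<subseteq> lattice_pts"
proof
  fix b assume "b \<in> wedge_star d \<beta> l"
  then obtain S where "b = (\<Sum>i\<in>S. \<beta> i)" "S \<subseteq> Wplus d \<beta> l"
    unfolding wedge_star_def by blast
  then have "b $ k \<in> \<int>" for k
    using assms by (auto simp: sum_component lattice_pts_def Wplus_def intro!: Ints_sum)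
  then show "b \<in> lattice_pts" by (simp add: lattice_pts_def)
qed

lemma wedge_star_inner_bounds:
  assumes "b \<in> wedge_star d \<beta> l"
  shows "0 < b \<bullet> l" "b \<bullet> l < (\<Sum>i\<in>Wplus d \<beta> l. \<beta> i \<bullet> l)"
proof -
  let ?W = "Wplus d \<beta> l"
  obtain S where S: "b = (\<Sum>i\<in>S. \<beta> i)" "S \<subseteq> ?W" "1 \<le> card S" "card S \<le> card ?W - 1"
    using assms unfolding wedge_star_def by blast
  have finW: "finite ?W" by (simp add: Wplus_def)
  have pos: "\<beta> i \<bullet> l > 0" if "i \<in> ?W" for i using that by (simp add: Wplus_def)
  have "finite S" "S \<noteq> {}" using S(2,3) finW finite_subset by fastforce+
  have bl: "b \<bullet> l = (\<Sum>i\<in>S. \<beta> i \<bullet> l)" by (simp add: S(1) inner_sum_left)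
  show "0 < b \<bullet> l"
    unfolding bl using \<open>finite S\<close> \<open>S \<noteq> {}\<close> by (rule sum_pos) (use S(2) pos in blast)
  have "card S < card ?W" using S(3,4) by linarith
  then have "?W - S \<noteq> {}" using card_mono[OF \<open>finite S\<close>, of ?W] by auto
  then have "0 < (\<Sum>i\<in>?W - S. \<beta> i \<bullet> l)" using finW pos by (intro sum_pos) auto
  moreover have "(\<Sum>i\<in>?W. \<beta> i \<bullet> l) = b \<bullet> l + (\<Sum>i\<in>?W - S. \<beta> i \<bullet> l)"
    using S(2) finW by (simp add: bl sum.subset_diff[of S])
  ultimately show "b \<bullet> l < (\<Sum>i\<in>?W. \<beta> i \<bullet> l)" by simp
qed

lemma hyps_imp_hyperplane:
  assumes "H \<in> hyps d \<beta>"
  obtains a e where "a \<noteq> 0" "H = {z. a \<bullet> z = e}"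
  using assms that unfolding hyps_def affine_hyperplane_def by (auto simp: translate_hyperplane)

lemma translated_facet_in_hyps:
  assumes "(\<Sum>i<d. \<beta> i) = 0" "y \<in> lattice_pts"
    and "a \<noteq> 0" "(nabla d \<beta> \<inter> {x. a \<bullet> x = b}) facet_of nabla d \<beta>"
  shows "{z. a \<bullet> z = a \<bullet> y - b} \<in> hyps d \<beta>"
proof -
  define B where "B = {x. (- a) \<bullet> x = b}"
  have sym: "uminus ` nabla d \<beta> = nabla d \<beta>" by (rule nabla_uminus[OF assms(1)])
  then have neg_iff: "- x \<in> nabla d \<beta> \<longleftrightarrow> x \<in> nabla d \<beta>" for x
    by (metis imageI minus_minus)
  let ?G = "nabla d \<beta> \<inter> {x. a \<bullet> x = b}"
  have "B \<inter> nabla d \<beta> = uminus ` ?G"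
  proof (intro set_eqI iffI)
    fix x assume "x \<in> B \<inter> nabla d \<beta>"
    then show "x \<in> uminus ` ?G"
      by (intro rev_image_eqI[of "- x"]) (auto simp: B_def neg_iff)
  qed (auto simp: B_def neg_iff)
  then have "(B \<inter> nabla d \<beta>) facet_of nabla d \<beta>"
    using facet_of_linear_image[OF linear_uminus, of ?G "nabla d \<beta>"] assms(4) by (simp add: sym)
  moreover have "affine_hyperplane B"
    unfolding affine_hyperplane_def B_def using \<open>a \<noteq> 0\<close> by (intro exI[of _ "- a"] exI[of _ b]) auto
  ultimately have "(\<lambda>x. y + x) ` B \<in> hyps d \<beta>"
    using assms(2) unfolding hyps_def by blast
  moreover have "(\<lambda>x. y + x) ` B = {z. a \<bullet> z = a \<bullet> y - b}"
    unfolding B_def translate_hyperplane by (auto simp: algebra_simps)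
  ultimately show ?thesis by simp
qed

locale wall_crossing =
  fixes d :: nat and \<beta> :: "nat \<Rightarrow> real^'n" and \<delta> \<delta>' \<delta>0 l :: "real^'n" and H :: "(real^'n) set"
  assumes weights: "\<forall>i<d. \<beta> i \<in> lattice_pts"
    and qs: "quasi_symmetric d \<beta>"
    and spans: "span (zonotope d \<beta>) = UNIV"
    and wall_unique: "\<And>H'. H' \<in> hyps d \<beta> \<Longrightarrow> H' \<inter> closed_segment \<delta> \<delta>' \<noteq> {} \<Longrightarrow> H' = H"
    and wall_eq: "H = {z. z \<bullet> l = \<delta>0 \<bullet> l}"
    and crossing_point: "\<delta>0 \<in> closed_segment \<delta> \<delta>'"
    and below_wall: "\<delta> \<bullet> l < \<delta>0 \<bullet> l"
begin

lemma sum_weights_eq_0: "(\<Sum>i<d. \<beta> i) = 0"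
  using qs by (rule quasi_symmetric_sum_eq_0)

lemma exit_point_on_extreme_face:
  assumes "y \<in> lattice_pts" "u \<in> closed_segment \<delta> \<delta>'" "v \<in> closed_segment \<delta> \<delta>'"
    and "y - u \<in> nabla d \<beta>" "y - v \<notin> nabla d \<beta>"
  shows "y - \<delta>0 \<in> nabla d \<beta>"
    and "(\<forall>z\<in>nabla d \<beta>. (y - \<delta>0) \<bullet> l \<le> z \<bullet> l) \<or> (\<forall>z\<in>nabla d \<beta>. z \<bullet> l \<le> (y - \<delta>0) \<bullet> l)"
proof -
  let ?N = "nabla d \<beta>"
  \<comment> \<open>The translate by y of the facet through which nabla is left is a wall meeting the
    segment from \<delta> to \<delta>', hence it is H.\<close>
  obtain p a b where p: "p \<in> closed_segment (y - u) (y - v)" "p \<in> ?N" "a \<bullet> p = b"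
    and ab: "a \<noteq> 0" "?N \<subseteq> {x. a \<bullet> x \<le> b}" "(?N \<inter> {x. a \<bullet> x = b}) facet_of ?N"
    using polyhedron_exit_facet[OF polytope_imp_polyhedron[OF polytope_nabla]
        affine_hull_nabla[OF spans] assms(4,5)] .
  have seg: "y - p \<in> closed_segment \<delta> \<delta>'"
    using diff_mem_closed_segment[OF p(1)] assms(2,3) subset_closed_segment by blast
  have on_plane: "a \<bullet> (y - p) = a \<bullet> y - b"
    using p(3) by (simp add: inner_diff_right)
  have wall: "{z. a \<bullet> z = a \<bullet> y - b} = H"
    using wall_unique[OF translated_facet_in_hyps[OF sum_weights_eq_0 assms(1) ab(1,3)]] seg on_plane
    by blast
  have "y - p = \<delta>0"
    using closed_segment_meets_level_set_once[of \<delta> l "\<delta>0 \<bullet> l" "y - p" \<delta>' \<delta>0]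
      below_wall seg crossing_point on_plane wall wall_eq by auto
  then have "p = y - \<delta>0" by auto
  then show "y - \<delta>0 \<in> ?N" using p(2) by simp
  have "l \<noteq> 0" using below_wall by auto
  then obtain r where r: "l = r *\<^sub>R a" "\<delta>0 \<bullet> l = r * (a \<bullet> y - b)"
    using hyperplane_subset_imp_parallel[OF ab(1), of l "a \<bullet> y - b" "\<delta>0 \<bullet> l"] wall wall_eq
    by (auto simp: inner_commute)
  have level: "(y - \<delta>0) \<bullet> l = r * b" and scaled: "z \<bullet> l = r * (a \<bullet> z)" for z
    using r by (auto simp: inner_diff_left algebra_simps inner_commute)
  show "(\<forall>z\<in>?N. (y - \<delta>0) \<bullet> l \<le> z \<bullet> l) \<or> (\<forall>z\<in>?N. z \<bullet> l \<le> (y - \<delta>0) \<bullet> l)"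
  proof (cases "0 \<le> r")
    case True
    then have "z \<bullet> l \<le> (y - \<delta>0) \<bullet> l" if "z \<in> ?N" for z
      using ab(2) that True unfolding level scaled[of z] by (auto intro: mult_left_mono)
    then show ?thesis by blast
  next
    case False
    then have "(y - \<delta>0) \<bullet> l \<le> z \<bullet> l" if "z \<in> ?N" for z
      using ab(2) that False unfolding level scaled[of z] by (auto intro: mult_left_mono_neg)
    then show ?thesis by blast
  qed
qed

theorem shift_by_wedge_star_in_both_chambers:
  assumes chi: "chi \<in> Cset d \<beta> \<delta> - Cset d \<beta> \<delta>'" and b: "b \<in> wedge_star d \<beta> l"
  shows "chi + b \<in> Cset d \<beta> \<delta> \<inter> Cset d \<beta> \<delta>'"
proof -
  let ?N = "nabla d \<beta>"
  have ends: "\<delta> \<in> closed_segment \<delta> \<delta>'" "\<delta>' \<in> closed_segment \<delta> \<delta>'" by auto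
  have chi_L: "chi \<in> lattice_pts" and chi_in: "chi - \<delta> \<in> ?N" and chi_out: "chi - \<delta>' \<notin> ?N"
    using chi by (auto simp: mem_Cset_iff)
  define x where "x = chi - \<delta>0"
  note exit = exit_point_on_extreme_face[OF chi_L ends chi_in chi_out, folded x_def]
  have "x \<bullet> l < (chi - \<delta>) \<bullet> l"
    using below_wall by (simp add: x_def inner_diff_left)
  then have x_min: "\<forall>z\<in>?N. x \<bullet> l \<le> z \<bullet> l"
    using exit(2) chi_in by force
  obtain a where a: "\<forall>i<d. 0 \<le> a i \<and> a i \<le> 1" and x_eq: "x = (\<Sum>i<d. (a i / 2) *\<^sub>R \<beta> i)"
    using exit(1) unfolding mem_nabla_iff by blast
  note coeffs = nabla_minimizer_forced_coeffs[OF a x_min[unfolded x_eq]]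
  obtain S where S: "b = (\<Sum>i\<in>S. \<beta> i)" "S \<subseteq> Wplus d \<beta> l"
    using b unfolding wedge_star_def by blast
  have y_in: "x + b \<in> ?N"
    using min_face_point_plus_positive_sum_in_nabla[OF qs a coeffs S(2)] by (simp add: x_eq S(1))
  have "2 * (x \<bullet> l) = - (\<Sum>i\<in>Wplus d \<beta> l. \<beta> i \<bullet> l)"
    unfolding x_eq by (rule inner_min_face_point[OF sum_weights_eq_0 coeffs])
  then have "x \<bullet> l < (x + b) \<bullet> l" "(x + b) \<bullet> l < (- x) \<bullet> l"
    using wedge_star_inner_bounds[OF b] by (simp_all add: inner_add_left)
  moreover have "- x \<in> ?N"
    using exit(1) nabla_uminus[OF sum_weights_eq_0] by blast
  ultimately have not_extreme:
    "\<not> ((\<forall>z\<in>?N. (x + b) \<bullet> l \<le> z \<bullet> l) \<or> (\<forall>z\<in>?N. z \<bullet> l \<le> (x + b) \<bullet> l))"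
    using exit(1) by force
  have y_L: "chi + b \<in> lattice_pts"
    using lattice_pts_add[OF chi_L] wedge_star_subset_lattice_pts[OF weights] b by blast
  have "chi + b - e \<in> ?N" if "e \<in> closed_segment \<delta> \<delta>'" for e
  proof (rule ccontr)
    assume "chi + b - e \<notin> ?N"
    from exit_point_on_extreme_face(2)[OF y_L crossing_point that _ this] y_in not_extreme
    show False by (simp add: x_def algebra_simps)
  qed
  then show ?thesis
    using y_L ends by (simp add: mem_Cset_iff)
qed

end

theorem lemma4p12:
  fixes d :: nat and \<beta> :: "nat \<Rightarrow> real^'n"
    and \<delta> \<delta>' \<delta>0 lamF :: "real^'n" and c :: real
    and H F :: "(real^'n) set"
  assumes weights: "\<forall>i<d. \<beta> i \<in> lattice_pts"
    and qs: "quasi_symmetric d \<beta>"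
    and spans: "span (zonotope d \<beta>) = UNIV"
    and generic: "\<exists>x. \<forall>P. P facet_of zonotope d \<beta> \<longrightarrow> x \<notin> span {a - b | a b. a \<in> P \<and> b \<in> P}"
    and adj: "adjacent d \<beta> \<delta> \<delta>'"
    and H: "H \<in> hyps d \<beta>" "H \<inter> closed_segment \<delta> \<delta>' \<noteq> {}"
    and d0: "\<delta>0 \<in> closed_segment \<delta> \<delta>'" "\<delta>0 \<in> H"
    and F: "F facet_of ((\<lambda>x. \<delta>0 + x) ` nabla d \<beta>)"
    and Fpar: "\<exists>t. affine hull F = (\<lambda>x. t + x) ` H"
    and Fmeet: "F \<inter> ((\<lambda>x. \<delta> + x) ` nabla d \<beta>) \<noteq> {}"
    and normal: "lamF \<noteq> 0" "\<forall>x\<in>(\<lambda>x. \<delta>0 + x) ` nabla d \<beta>. x \<bullet> lamF \<ge> c"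
                "\<forall>x\<in>F. x \<bullet> lamF = c"
  shows "\<forall>chi\<in>Cset d \<beta> \<delta> - Cset d \<beta> \<delta>'. \<forall>b\<in>wedge_star d \<beta> lamF.
           chi + b \<in> Cset d \<beta> \<delta> \<inter> Cset d \<beta> \<delta>'"
proof -
  obtain a e where "a \<noteq> 0" "H = {z. a \<bullet> z = e}"
    using hyps_imp_hyperplane[OF H(1)] .
  moreover obtain t where "affine hull F = (\<lambda>x. t + x) ` H"
    using Fpar by blast
  moreover have "affine hull F \<subseteq> {x. x \<bullet> lamF = c}"
    using normal(3) affine_hyperplane[of lamF c] by (intro hull_minimal) (auto simp: inner_commute)
  ultimately have wall: "H = {z. z \<bullet> lamF = \<delta>0 \<bullet> lamF}"
    using hyperplane_eq_level_set[OF _ normal(1)] d0(2) by metis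
  obtain n where "\<delta> + n \<in> F" "n \<in> nabla d \<beta>"
    using Fmeet by blast
  then have "\<delta> \<bullet> lamF \<le> \<delta>0 \<bullet> lamF"
    using normal(2,3) by (force simp: inner_add_left)
  moreover have "\<delta> \<notin> H"
    using adj H(1) unfolding adjacent_def by blast
  ultimately have "\<delta> \<bullet> lamF < \<delta>0 \<bullet> lamF"
    using wall by auto
  moreover have "H' = H" if "H' \<in> hyps d \<beta>" "H' \<inter> closed_segment \<delta> \<delta>' \<noteq> {}" for H'
    using adj H that unfolding adjacent_def by blast
  ultimately interpret wall_crossing d \<beta> \<delta> \<delta>' \<delta>0 lamF H
    using weights qs spans wall d0(1) by unfold_locales auto
  show ?thesis
    using shift_by_wedge_star_in_both_chambers by blast
qed

end
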